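(* Let $\mathcal{P}$ be the class of unimodal probability measures on $\mathbb{R}$ that admit a smooth and bounded density. Then the mode functional $\Gamma_{\text{mode}}:\mathcal{P}\to\mathbb{R}$ is not identifiable with respect to $\mathcal{P}$: there is no function $V:\mathbb{R}\times\mathbb{R}\to\mathbb{R}$ such that for all $P\in\mathcal{P}$ and all $r\in\mathbb{R}$, $\Gamma_{\text{mode}}(P)=r$ if and only if $E_P V(r,Y)=0$.
   Context: Mode: for $P$ with distribution function $F$ and $\varepsilon>0$, a modal midpoint $\Gamma_\varepsilon(P)$ is any $x\in\arg\max_x\big(F(x+\varepsilon)-\lim_{z\uparrow x-\varepsilon}F(z)\big)$. If there is a sequence $\varepsilon_n\to0$ and a choice of modal midpoints $\Gamma_{\varepsilon_n}(P)$ converging to a real number, that limit is a mode of $P$ (for a continuous density it is the global maximizer of the density). $P$ is called unimodal if its mode is well-defined and unique; $\Gamma_{\text{mode}}(P)$ denotes this unique mode. $E_P V(r,Y)$ denotes the expectation of $V(r,Y)$ for $Y\sim P$. *)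

theory Defs
  imports "HOL-Probability.Probability"
begin

definition cdf_of :: "real measure \<Rightarrow> real \<Rightarrow> real" where
  "cdf_of M x = measure M {..x}"

definition modal_midpoint :: "real measure \<Rightarrow> real \<Rightarrow> real \<Rightarrow> bool" where
  "modal_midpoint M eps x \<longleftrightarrow>
     (\<forall>y. cdf_of M (y + eps) - Lim (at_left (y - eps)) (cdf_of M)
          \<le> cdf_of M (x + eps) - Lim (at_left (x - eps)) (cdf_of M))"

definition is_mode :: "real measure \<Rightarrow> real \<Rightarrow> bool" where
  "is_mode M m \<longleftrightarrow>
     (\<exists>eps x :: nat \<Rightarrow> real. (\<forall>n. eps n > 0) \<and> eps \<longlonglongrightarrow> 0 \<and>
        (\<forall>n. modal_midpoint M (eps n) (x n)) \<and> x \<longlonglongrightarrow> m)"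

definition unimodal :: "real measure \<Rightarrow> bool" where
  "unimodal M \<longleftrightarrow> (\<exists>!m. is_mode M m)"

definition mode :: "real measure \<Rightarrow> real" where
  "mode M = (THE m. is_mode M m)"

definition smooth :: "(real \<Rightarrow> real) \<Rightarrow> bool" where
  "smooth f \<longleftrightarrow> (\<forall>n x. (deriv ^^ n) f differentiable (at x))"

definition class_P :: "real measure set" where
  "class_P = {M. prob_space M \<and> sets M = sets borel \<and> unimodal M \<and>
     (\<exists>f. smooth f \<and> (\<forall>x. f x \<ge> 0) \<and> bounded (range f) \<and>
          M = density lborel (\<lambda>x. ennreal (f x)))}"

end

theory Submission
  imports Defs
begin

(* The condition E_P V(0, Y) = 0 is affine in P: if it holds for two densities, it holds for
   every affine combination of them that is again a probability density, even with a negative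
   coefficient. Mixing a smooth bump psi at 0 with its translate at 2, with weights t and 1 - t,
   gives a unimodal law in the class whose mode is 0 for t > 1/2 and 2 for t < 1/2. As
   1/4 = (-5) * 3/4 + 6 * 2/3, the mixture with t = 1/4 is an affine combination of those with
   t = 3/4 and t = 2/3; both of these have mode 0, so V would force mode 0 on it as well. *)

section \<open>Smooth bump functions\<close>

definition exp_recip :: "nat \<Rightarrow> real \<Rightarrow> real" where
  "exp_recip k u = (if 0 < u then exp (- 1 / u) / u ^ k else 0)"

lemma mult_exp_recip_Suc: "u * exp_recip (Suc k) u = exp_recip k u"
  by (simp add: exp_recip_def)

lemma exp_recip_tendsto_0: "(exp_recip k \<longlongrightarrow> 0) (at 0)"
proof (rule filterlim_split_at_real)
  have "\<forall>\<^sub>F v in at_top. exp_recip k (inverse v) = v ^ k / exp v"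
    using eventually_gt_at_top[of 0]
    by eventually_elim (simp add: exp_recip_def exp_minus' power_inverse divide_inverse)
  then have "((\<lambda>v. exp_recip k (inverse v)) \<longlongrightarrow> 0) at_top"
    using tendsto_power_div_exp_0 by (rule tendsto_cong[THEN iffD2])
  then show "(exp_recip k \<longlongrightarrow> 0) (at_right 0)"
    by (rule filterlim_at_right_to_top[THEN iffD2])
  have "\<forall>\<^sub>F u in at_left (0::real). exp_recip k u = 0"
    using eventually_at_left_real[of "-1" "0::real"] by (rule eventually_mono) (auto simp: exp_recip_def)
  then show "(exp_recip k \<longlongrightarrow> 0) (at_left 0)"
    by (rule tendsto_eventually)
qed

lemma has_real_derivative_exp_recip:
  "(exp_recip k has_real_derivative exp_recip (k + 2) u - k * exp_recip (k + 1) u) (at u)"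
proof -
  consider "0 < u" | "u < 0" | "u = 0" by linarith
  then show ?thesis
  proof cases
    case 1
    have "0 < u \<Longrightarrow> ((\<lambda>u. exp (- 1 / u) / u ^ k) has_real_derivative
        exp_recip (k + 2) u - k * exp_recip (k + 1) u) (at u)"
      by (rule derivative_eq_intros refl | simp)+
        (cases k; simp add: exp_recip_def field_simps power2_eq_square)
    from this[OF 1] show ?thesis
      by (rule has_field_derivative_transform_within_open[where S = "{0<..}"])
         (use 1 in \<open>auto simp: exp_recip_def\<close>)
  next
    case 2
    then have "((\<lambda>_. 0) has_real_derivative exp_recip (k + 2) u - k * exp_recip (k + 1) u) (at u)"
      by (simp add: exp_recip_def)
    then show ?thesis
      by (rule has_field_derivative_transform_within_open[where S = "{..<0}"])
         (use 2 in \<open>auto simp: exp_recip_def\<close>)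
  next
    case 3
    have "\<forall>\<^sub>F v in at 0. exp_recip (Suc k) v = (exp_recip k v - exp_recip k 0) / (v - 0)"
      by (simp add: eventually_at_filter exp_recip_def field_simps)
    then have "((\<lambda>v. (exp_recip k v - exp_recip k 0) / (v - 0)) \<longlongrightarrow> 0) (at 0)"
      using exp_recip_tendsto_0 by (rule tendsto_cong[THEN iffD1])
    then show ?thesis
      using 3 by (simp add: DERIV_def exp_recip_def)
  qed
qed

lemma exp_recip_eq_power_mult: "exp_recip k u = u ^ j * exp_recip (k + j) u"
proof (induction j)
  case (Suc j)
  have "exp_recip (k + j) u = u * exp_recip (k + Suc j) u"
    using mult_exp_recip_Suc[of u "k + j"] by simp
  with Suc.IH show ?case
    by simp
qed simp

definition bump :: "real poly \<Rightarrow> nat \<Rightarrow> real \<Rightarrow> real" where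
  "bump p k x = poly p x * exp_recip k (1 - x\<^sup>2)"

definition bump_deriv_poly :: "real poly \<Rightarrow> nat \<Rightarrow> real poly" where
  "bump_deriv_poly p k = pderiv p * [:1, 0, -1:] ^ 2
     + smult (2 * real k) ([:0, 1:] * p * [:1, 0, -1:]) - smult 2 ([:0, 1:] * p)"

lemma has_real_derivative_bump:
  "(bump p k has_real_derivative bump (bump_deriv_poly p k) (k + 2) x) (at x)"
proof -
  define u where "u = 1 - x\<^sup>2"
  have derivative: "(bump p k has_real_derivative poly (pderiv p) x * exp_recip k u
      + poly p x * ((exp_recip (k + 2) u - k * exp_recip (k + 1) u) * (- 2 * x))) (at x)"
    unfolding bump_def[abs_def] u_def
    by (rule derivative_eq_intros DERIV_chain2[OF has_real_derivative_exp_recip] refl | simp)+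
  have "poly (pderiv p) x * exp_recip k u
      + poly p x * ((exp_recip (k + 2) u - k * exp_recip (k + 1) u) * (- 2 * x))
      = (poly (pderiv p) x * u\<^sup>2 + 2 * real k * x * poly p x * u - 2 * x * poly p x)
        * exp_recip (k + 2) u"
    using exp_recip_eq_power_mult[of k u 2] exp_recip_eq_power_mult[of "k + 1" u 1]
    by (simp add: algebra_simps)
  also have "\<dots> = bump (bump_deriv_poly p k) (k + 2) x"
    by (simp add: bump_def bump_deriv_poly_def u_def algebra_simps power2_eq_square)
  finally show ?thesis
    by (rule DERIV_cong[OF derivative])
qed

lemma smooth_has_real_derivative: "smooth f \<Longrightarrow> (f has_real_derivative deriv f x) (at x)"
  unfolding smooth_def by (metis funpow_0 DERIV_deriv_iff_real_differentiable)

lemma smooth_deriv: "smooth f \<Longrightarrow> smooth (deriv f)"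
  unfolding smooth_def by (metis funpow_Suc_right o_apply)

lemma smooth_if_derivative_closed:
  assumes "f \<in> S"
    and closed: "\<And>g. g \<in> S \<Longrightarrow> \<exists>g' \<in> S. \<forall>x. (g has_real_derivative g' x) (at x)"
  shows "smooth f"
proof -
  have "(deriv ^^ n) g \<in> S" if "g \<in> S" for n g
    using that
  proof (induction n arbitrary: g)
    case (Suc n)
    then obtain g' where "g' \<in> S" "\<And>x. (g has_real_derivative g' x) (at x)"
      using closed by blast
    then have "deriv g \<in> S"
      using DERIV_imp_deriv by (metis ext)
    then show ?case
      using Suc.IH by (simp add: funpow_Suc_right del: funpow.simps)
  qed simp
  then show ?thesis
    unfolding smooth_def using assms real_differentiable_def by metis
qed

lemma smooth_bump: "smooth (bump p k)"
  by (rule smooth_if_derivative_closed[where S = "{bump p k | p k. True}"])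
    (use has_real_derivative_bump in blast)+

lemma smooth_shift:
  assumes "smooth f"
  shows "smooth (\<lambda>x. f (x - c))"
proof (rule smooth_if_derivative_closed[where S = "{\<lambda>x. g (x - c) | g. smooth g}"])
  fix h assume "h \<in> {\<lambda>x. g (x - c) | g. smooth g}"
  then obtain g where h: "h = (\<lambda>x. g (x - c))" and g: "smooth g"
    by blast
  have "(h has_real_derivative deriv g (x - c)) (at x)" for x
    using DERIV_shift[of g "deriv g (x - c)" x "- c"] smooth_has_real_derivative[OF g]
    by (simp add: h)
  then show "\<exists>h' \<in> {\<lambda>x. g (x - c) | g. smooth g}. \<forall>x. (h has_real_derivative h' x) (at x)"
    using smooth_deriv[OF g] by (intro bexI[where x = "\<lambda>x. deriv g (x - c)"]) auto
qed (use assms in blast)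

lemma smooth_linear_combination:
  assumes "smooth f" "smooth g"
  shows "smooth (\<lambda>x. a * f x + b * g x)"
proof (rule smooth_if_derivative_closed
    [where S = "{\<lambda>x. a * f x + b * g x | f g. smooth f \<and> smooth g}"])
  fix h assume "h \<in> {\<lambda>x. a * f x + b * g x | f g. smooth f \<and> smooth g}"
  then obtain f g where h: "h = (\<lambda>x. a * f x + b * g x)" and fg: "smooth f" "smooth g"
    by blast
  have "(h has_real_derivative a * deriv f x + b * deriv g x) (at x)" for x
    unfolding h
    by (auto intro!: derivative_eq_intros smooth_has_real_derivative[OF fg(1)]
        smooth_has_real_derivative[OF fg(2)])
  then show "\<exists>h' \<in> {\<lambda>x. a * f x + b * g x | f g. smooth f \<and> smooth g}.
      \<forall>x. (h has_real_derivative h' x) (at x)"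
    using smooth_deriv[OF fg(1)] smooth_deriv[OF fg(2)]
    by (intro bexI[where x = "\<lambda>x. a * deriv f x + b * deriv g x"]) auto
qed (use assms in blast)

section \<open>Modes of continuous compactly supported densities\<close>

lemma integrable_if_continuous_vanishing_outside:
  fixes f :: "real \<Rightarrow> real"
  assumes "\<And>x. isCont f x" and "\<And>x. x \<notin> {a..b} \<Longrightarrow> f x = 0"
  shows "integrable lborel f"
proof -
  have "integrable lborel (\<lambda>x. indicator {a..b} x *\<^sub>R f x)"
    using assms(1) by (intro borel_integrable_compact) (auto intro: continuous_at_imp_continuous_on)
  also have "(\<lambda>x. indicator {a..b} x *\<^sub>R f x) = f"
    using assms(2) by (auto split: split_indicator)
  finally show ?thesis .
qed

definition well_separated_max :: "(real \<Rightarrow> real) \<Rightarrow> real \<Rightarrow> bool" where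
  "well_separated_max f m \<longleftrightarrow> (\<forall>d > 0. \<exists>s < f m. \<forall>x. d \<le> \<bar>x - m\<bar> \<longrightarrow> f x \<le> s)"

lemma well_separated_max_le:
  assumes "well_separated_max f m"
  shows "f x \<le> f m"
proof (cases "x = m")
  case False
  then have "\<exists>s < f m. \<forall>y. \<bar>x - m\<bar> \<le> \<bar>y - m\<bar> \<longrightarrow> f y \<le> s"
    using assms unfolding well_separated_max_def by simp
  then show ?thesis
    by force
qed simp

locale compactly_supported_density =
  fixes f :: "real \<Rightarrow> real" and lo hi :: real
  assumes continuous: "\<And>x. isCont f x"
    and nonneg: "\<And>x. 0 \<le> f x"
    and vanishing_outside: "\<And>x. x \<notin> {lo..hi} \<Longrightarrow> f x = 0"
    and integral_eq_1: "integral\<^sup>L lborel f = 1"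
begin

abbreviation distr :: "real measure" where
  "distr \<equiv> density lborel (\<lambda>x. ennreal (f x))"

lemma integrable: "integrable lborel f"
  using continuous vanishing_outside by (rule integrable_if_continuous_vanishing_outside)

lemma borel_measurable[measurable]: "f \<in> borel_measurable borel"
  using borel_measurable_integrable[OF integrable] by simp

lemma integrable_indicator_mult: "A \<in> sets borel \<Longrightarrow> integrable lborel (\<lambda>x. indicator A x * f x)"
  using integrable_mult_indicator[of A lborel f] integrable by simp

lemma lo_le_hi: "lo \<le> hi"
proof (rule ccontr)
  assume "\<not> lo \<le> hi"
  then have "f = (\<lambda>_. 0)"
    using vanishing_outside by fastforce
  then show False
    using integral_eq_1 by simp
qed

lemma emeasure_distr:
  assumes "A \<in> sets borel"
  shows "emeasure distr A = ennreal (\<integral>x. indicator A x * f x \<partial>lborel)"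
proof -
  have "emeasure distr A = (\<integral>\<^sup>+ x. ennreal (indicator A x * f x) \<partial>lborel)"
    using assms by (auto simp: emeasure_density intro!: nn_integral_cong split: split_indicator)
  also have "\<dots> = ennreal (\<integral>x. indicator A x * f x \<partial>lborel)"
    using assms nonneg by (intro nn_integral_eq_integral integrable_indicator_mult) auto
  finally show ?thesis .
qed

lemma measure_distr:
  assumes "A \<in> sets borel"
  shows "measure distr A = (\<integral>x. indicator A x * f x \<partial>lborel)"
proof -
  have "0 \<le> (\<integral>x. indicator A x * f x \<partial>lborel)"
    using nonneg by (intro integral_nonneg_AE) auto
  then show ?thesis
    using emeasure_distr[OF assms] by (simp add: measure_def)
qed

lemma real_distribution_distr: "real_distribution distr"
proof -
  have "prob_space distr"
    using emeasure_distr[of UNIV] integral_eq_1 by (intro prob_spaceI) simp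
  then show ?thesis
    by (simp add: real_distribution_def real_distribution_axioms_def)
qed

lemma isCont_cdf_of: "isCont (cdf_of distr) x"
proof -
  interpret real_distribution distr
    by (rule real_distribution_distr)
  have "AE y in lborel. indicator {x} y * f y = 0"
    using AE_lborel_singleton[of x] by eventually_elim (auto split: split_indicator)
  then have "(\<integral>y. indicator {x} y * f y \<partial>lborel) = 0"
    by (rule integral_eq_zero_AE)
  then have "isCont (cdf distr) x"
    by (simp add: isCont_cdf measure_distr)
  then show ?thesis
    by (simp add: cdf_def cdf_of_def[abs_def])
qed

lemma Lim_at_left_cdf_of: "Lim (at_left x) (cdf_of distr) = cdf_of distr x"
  using isCont_cdf_of[of x] by (intro tendsto_Lim) (simp_all add: isCont_def filterlim_at_split)

definition window :: "real \<Rightarrow> real \<Rightarrow> real" where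
  "window eps y = (\<integral>x. indicator {y - eps<..y + eps} x * f x \<partial>lborel)"

lemma window_eq_cdf_of_diff:
  assumes "0 < eps"
  shows "window eps y = cdf_of distr (y + eps) - cdf_of distr (y - eps)"
proof -
  interpret real_distribution distr
    by (rule real_distribution_distr)
  show ?thesis
    using cdf_diff_eq[of "y - eps" "y + eps"] assms
    by (simp add: window_def cdf_def cdf_of_def measure_distr)
qed

lemma modal_midpoint_iff_window_max:
  "0 < eps \<Longrightarrow> modal_midpoint distr eps x \<longleftrightarrow> (\<forall>y. window eps y \<le> window eps x)"
  by (simp add: modal_midpoint_def Lim_at_left_cdf_of window_eq_cdf_of_diff)

lemma window_le:
  assumes "0 \<le> eps" and "\<And>z. z \<in> {y - eps<..y + eps} \<Longrightarrow> f z \<le> s"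
  shows "window eps y \<le> 2 * eps * s"
proof -
  have "window eps y \<le> (\<integral>x. indicator {y - eps<..y + eps} x * s \<partial>lborel)"
    unfolding window_def using assms
    by (intro integral_mono integrable_indicator_mult integrable_mult_left integrable_real_indicator)
      (auto split: split_indicator)
  also have "\<dots> = 2 * eps * s"
    using assms(1) by simp
  finally show ?thesis .
qed

lemma window_ge:
  assumes "0 \<le> eps" and "\<And>z. z \<in> {y - eps<..y + eps} \<Longrightarrow> s \<le> f z"
  shows "2 * eps * s \<le> window eps y"
proof -
  have "2 * eps * s = (\<integral>x. indicator {y - eps<..y + eps} x * s \<partial>lborel)"
    using assms(1) by simp
  also have "\<dots> \<le> window eps y"
    unfolding window_def using assms
    by (intro integral_mono integrable_indicator_mult integrable_mult_left integrable_real_indicator)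
      (auto split: split_indicator)
  finally show ?thesis .
qed

lemma window_less_window:
  assumes "0 < eps" "s < c"
    and "\<And>z. z \<in> {y - eps<..y + eps} \<Longrightarrow> f z \<le> s"
    and "\<And>z. z \<in> {y' - eps<..y' + eps} \<Longrightarrow> c \<le> f z"
  shows "window eps y < window eps y'"
proof -
  have "window eps y \<le> 2 * eps * s"
    using assms by (intro window_le) auto
  also have "\<dots> < 2 * eps * c"
    using assms by simp
  also have "\<dots> \<le> window eps y'"
    using assms by (intro window_ge) auto
  finally show ?thesis .
qed

lemma modal_midpoint_exists:
  assumes "0 < eps"
  shows "\<exists>x. modal_midpoint distr eps x"
proof -
  let ?S = "{lo - eps..hi + eps}"
  have "window eps = (\<lambda>y. cdf_of distr (y + eps) - cdf_of distr (y - eps))"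
    using window_eq_cdf_of_diff[OF assms] by (intro ext)
  moreover have "isCont (\<lambda>y. cdf_of distr (y + eps) - cdf_of distr (y - eps)) y" for y
    by (intro continuous_intros isCont_o2[where g = "cdf_of distr", OF _ isCont_cdf_of])
  ultimately have "continuous_on ?S (window eps)"
    by (simp add: continuous_at_imp_continuous_on)
  then obtain x where "\<forall>y \<in> ?S. window eps y \<le> window eps x"
    using continuous_attains_sup[of ?S "window eps"] lo_le_hi assms by auto
  moreover have "window eps y \<le> window eps x" if "y \<notin> ?S" for y
  proof -
    have "window eps y \<le> 2 * eps * 0"
      using assms that vanishing_outside by (intro window_le) auto
    also have "\<dots> \<le> window eps x"
      using assms nonneg by (intro window_ge) auto
    finally show ?thesis .
  qed
  ultimately show ?thesis
    using modal_midpoint_iff_window_max[OF assms] by blast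
qed

lemma eventually_window_max_near:
  assumes "well_separated_max f m" and "0 < delta"
  shows "\<forall>\<^sub>F eps in at_right 0. \<forall>y. delta \<le> \<bar>y - m\<bar> \<longrightarrow> window eps y < window eps m"
proof -
  obtain s where s: "s < f m" "\<And>x. delta / 2 \<le> \<bar>x - m\<bar> \<Longrightarrow> f x \<le> s"
    using assms unfolding well_separated_max_def by (meson half_gt_zero)
  have "0 < (f m - s) / 2"
    using s(1) by simp
  then obtain d where d: "0 < d" "\<And>x. dist x m < d \<Longrightarrow> dist (f x) (f m) < (f m - s) / 2"
    using continuous[of m] unfolding continuous_at_eps_delta by blast
  have "\<forall>\<^sub>F eps in at_right 0. eps \<in> {0<..<min d (delta / 2)}"
    using d(1) assms(2) by (intro eventually_at_right_real) simp
  then show ?thesis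
  proof eventually_elim
    case (elim eps)
    then have eps: "0 < eps" "eps < d" "eps < delta / 2"
      by simp_all
    show ?case
    proof (intro allI impI)
      fix y assume y: "delta \<le> \<bar>y - m\<bar>"
      show "window eps y < window eps m"
      proof (rule window_less_window[where c = "(f m + s) / 2"])
        fix z assume "z \<in> {y - eps<..y + eps}"
        then have "\<bar>z - y\<bar> \<le> eps"
          by auto
        then have "delta / 2 \<le> \<bar>z - m\<bar>"
          using eps y by linarith
        then show "f z \<le> s"
          by (rule s(2))
      next
        fix z assume "z \<in> {m - eps<..m + eps}"
        then have "dist z m < d"
          using eps by (auto simp: dist_real_def)
        then have "\<bar>f z - f m\<bar> < (f m - s) / 2"
          using d(2) by (simp add: dist_real_def)
        then show "(f m + s) / 2 \<le> f z"
          unfolding abs_less_iff by (simp add: field_simps)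
      qed (use eps s(1) in simp_all)
    qed
  qed
qed

lemma modal_midpoints_tendsto_max:
  assumes max: "well_separated_max f m"
    and eps: "\<And>n. 0 < eps n" "eps \<longlonglongrightarrow> 0"
    and midpoints: "\<And>n. modal_midpoint distr (eps n) (x n)"
  shows "x \<longlonglongrightarrow> m"
proof (rule tendstoI)
  fix delta :: real
  assume "0 < delta"
  have "filterlim eps (at_right 0) sequentially"
    using eps by (intro tendsto_imp_filterlim_at_right) auto
  with eventually_window_max_near[OF max \<open>0 < delta\<close>]
  have "\<forall>\<^sub>F n in sequentially.
      \<forall>y. delta \<le> \<bar>y - m\<bar> \<longrightarrow> window (eps n) y < window (eps n) m"
    by (rule eventually_compose_filterlim)
  then show "\<forall>\<^sub>F n in sequentially. dist (x n) m < delta"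
  proof eventually_elim
    case (elim n)
    have "window (eps n) m \<le> window (eps n) (x n)"
      using midpoints[of n] modal_midpoint_iff_window_max[OF eps(1)] by blast
    with elim have "\<not> delta \<le> \<bar>x n - m\<bar>"
      by (meson leD)
    then show ?case
      by (simp add: dist_real_def)
  qed
qed

lemma is_mode_iff:
  assumes max: "well_separated_max f m"
  shows "is_mode distr m' \<longleftrightarrow> m' = m"
proof
  assume "is_mode distr m'"
  then obtain eps x where "\<And>n. 0 < eps n" "eps \<longlonglongrightarrow> 0"
      "\<And>n. modal_midpoint distr (eps n) (x n)" "x \<longlonglongrightarrow> m'"
    unfolding is_mode_def by blast
  then show "m' = m"
    using modal_midpoints_tendsto_max[OF max] LIMSEQ_unique by metis
next
  assume "m' = m"
  define eps :: "nat \<Rightarrow> real" where "eps n = inverse (Suc n)" for n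
  define x where "x n = (SOME z. modal_midpoint distr (eps n) z)" for n
  have eps: "\<And>n. 0 < eps n" "eps \<longlonglongrightarrow> 0"
    unfolding eps_def using LIMSEQ_inverse_real_of_nat by simp_all
  moreover have "\<And>n. modal_midpoint distr (eps n) (x n)"
    unfolding x_def using modal_midpoint_exists[OF eps(1)] by (rule someI_ex)
  ultimately show "is_mode distr m'"
    unfolding is_mode_def \<open>m' = m\<close> using modal_midpoints_tendsto_max[OF max] by blast
qed

lemma distr_in_class_P:
  assumes "smooth f" and max: "well_separated_max f m"
  shows "distr \<in> class_P" and "mode distr = m"
proof -
  have modes: "is_mode distr = (\<lambda>m'. m' = m)"
    using is_mode_iff[OF max] by blast
  have "unimodal distr"
    by (simp add: unimodal_def modes)
  moreover have "bounded (range f)"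
    using nonneg well_separated_max_le[OF max]
    by (intro bounded_subset[OF bounded_closed_interval[of 0 "f m"]]) auto
  ultimately show "distr \<in> class_P"
    using real_distribution_distr assms(1) nonneg
    unfolding class_P_def real_distribution_def real_distribution_axioms_def by auto
  show "mode distr = m"
    by (simp add: mode_def modes)
qed

end

section \<open>Mixtures of two bumps\<close>

definition psi :: "real \<Rightarrow> real" where
  "psi x = exp_recip 0 (1 - x\<^sup>2)"

lemma psi_nonneg: "0 \<le> psi x"
  by (simp add: psi_def exp_recip_def)

lemma psi_eq_0: "1 \<le> \<bar>x\<bar> \<Longrightarrow> psi x = 0"
  by (simp add: psi_def exp_recip_def abs_square_less_1)

lemma psi_abs: "psi \<bar>x\<bar> = psi x"
  by (simp add: psi_def)

lemma smooth_psi: "smooth psi"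
proof -
  have "psi = bump 1 0"
    by (simp add: psi_def bump_def fun_eq_iff)
  then show ?thesis
    using smooth_bump by metis
qed

lemma isCont_psi: "isCont psi x"
  using smooth_has_real_derivative[OF smooth_psi] by (rule DERIV_isCont)

lemma psi_antimono:
  assumes "0 \<le> d" "d \<le> \<bar>x\<bar>"
  shows "psi x \<le> psi d"
proof (cases "\<bar>x\<bar> < 1")
  case True
  have "d\<^sup>2 \<le> x\<^sup>2"
    using assms by (metis abs_le_square_iff abs_of_nonneg)
  moreover have "x\<^sup>2 < 1"
    using True by (simp add: abs_square_less_1)
  ultimately have "1 / (1 - d\<^sup>2) \<le> 1 / (1 - x\<^sup>2)"
    by (intro divide_left_mono) auto
  then show ?thesis
    using \<open>d\<^sup>2 \<le> x\<^sup>2\<close> \<open>x\<^sup>2 < 1\<close> by (simp add: psi_def exp_recip_def)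
qed (simp add: psi_eq_0 psi_nonneg)

lemma psi_less_psi_0:
  assumes "d \<noteq> 0"
  shows "psi d < psi 0"
proof (cases "\<bar>d\<bar> < 1")
  case True
  then have "0 < 1 - d\<^sup>2" "1 - d\<^sup>2 < 1"
    using assms by (simp_all add: abs_square_less_1)
  then have "1 < 1 / (1 - d\<^sup>2)"
    by (simp add: field_simps)
  then show ?thesis
    by (simp add: psi_def exp_recip_def \<open>0 < 1 - d\<^sup>2\<close>)
qed (simp add: psi_eq_0 psi_def exp_recip_def abs_square_less_1)

lemma integrable_psi: "integrable lborel psi"
  using isCont_psi psi_eq_0 by (rule integrable_if_continuous_vanishing_outside[of _ "-1" 1]) auto

lemma borel_measurable_psi[measurable]: "psi \<in> borel_measurable borel"
  using borel_measurable_integrable[OF integrable_psi] by simp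

definition psi_integral :: real where
  "psi_integral = (\<integral>x. psi x \<partial>lborel)"

lemma psi_integral_pos: "0 < psi_integral"
proof -
  have "indicator {-1/2<..1/2} x * psi (1/2) \<le> psi x" for x :: real
    using psi_antimono[of "\<bar>x\<bar>" "1/2"] psi_nonneg[of x]
    by (auto simp: psi_abs split: split_indicator)
  then have "(\<integral>x. indicator {-1/2<..1/2::real} x * psi (1/2) \<partial>lborel) \<le> psi_integral"
    unfolding psi_integral_def
    by (intro integral_mono integrable_psi integrable_mult_left integrable_real_indicator) auto
  moreover have "0 < psi (1/2)"
    by (simp add: psi_def exp_recip_def power2_eq_square)
  ultimately show ?thesis
    by simp
qed

lemma integral_psi_shift: "(\<integral>x. psi (x - c) \<partial>lborel) = psi_integral"
  using lborel_integral_real_affine[of 1 psi "- c"] by (simp add: psi_integral_def)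

lemma integrable_psi_shift: "integrable lborel (\<lambda>x. psi (x - c))"
  using lborel_integrable_real_affine[OF integrable_psi, of 1 "- c"] by simp

lemma well_separated_max_psi_pair:
  assumes "0 \<le> b" "b < a" "2 \<le> \<bar>p - q\<bar>"
  shows "well_separated_max (\<lambda>x. a * psi (x - p) + b * psi (x - q)) p"
  unfolding well_separated_max_def
proof (intro allI impI)
  fix d :: real
  assume "0 < d"
  let ?s = "max (a * psi d) (b * psi 0)"
  have "?s < a * psi 0"
    using assms psi_less_psi_0[of d] \<open>0 < d\<close> psi_less_psi_0[of 1] psi_nonneg[of 1]
    by (auto intro: mult_strict_left_mono mult_strict_right_mono)
  moreover have "a * psi (x - p) + b * psi (x - q) \<le> ?s" if "d \<le> \<bar>x - p\<bar>" for x
  proof (cases "\<bar>x - p\<bar> < 1")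
    case True
    then have "psi (x - q) = 0"
      using assms(3) by (intro psi_eq_0) linarith
    moreover have "a * psi (x - p) \<le> a * psi d"
      using psi_antimono \<open>0 < d\<close> that assms by (simp add: mult_left_mono)
    ultimately show ?thesis
      by simp
  next
    case False
    then have "psi (x - p) = 0"
      by (intro psi_eq_0) linarith
    moreover have "b * psi (x - q) \<le> b * psi 0"
      using psi_antimono[of 0] assms by (simp add: mult_left_mono)
    ultimately show ?thesis
      by simp
  qed
  ultimately show "\<exists>s < a * psi (p - p) + b * psi (p - q). \<forall>x. d \<le> \<bar>x - p\<bar> \<longrightarrow>
      a * psi (x - p) + b * psi (x - q) \<le> s"
    using psi_eq_0[of "p - q"] assms(3) by (intro exI[of _ ?s]) auto
qed

lemma integral_density_zero_linear_combination:
  fixes f g h V :: "real \<Rightarrow> real"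
  assumes [measurable]: "f \<in> borel_measurable borel" "g \<in> borel_measurable borel"
    and nonneg: "\<And>x. 0 \<le> f x" "\<And>x. 0 \<le> g x" "\<And>x. 0 \<le> h x"
    and h: "\<And>x. h x = a * f x + b * g x"
    and f_zero: "integrable (density lborel (\<lambda>x. ennreal (f x))) V"
      "(\<integral>y. V y \<partial>density lborel (\<lambda>x. ennreal (f x))) = 0"
    and g_zero: "integrable (density lborel (\<lambda>x. ennreal (g x))) V"
      "(\<integral>y. V y \<partial>density lborel (\<lambda>x. ennreal (g x))) = 0"
  shows "integrable (density lborel (\<lambda>x. ennreal (h x))) V
    \<and> (\<integral>y. V y \<partial>density lborel (\<lambda>x. ennreal (h x))) = 0"
proof -
  have [measurable]: "V \<in> borel_measurable borel"
    using borel_measurable_integrable[OF f_zero(1)] by (simp cong: measurable_cong_sets)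
  have [measurable]: "h \<in> borel_measurable borel"
    unfolding h[abs_def] by measurable
  have "integrable lborel (\<lambda>x. f x * V x)" "(\<integral>x. f x * V x \<partial>lborel) = 0"
    using f_zero nonneg(1) by (simp_all add: integrable_density integral_density)
  moreover have "integrable lborel (\<lambda>x. g x * V x)" "(\<integral>x. g x * V x \<partial>lborel) = 0"
    using g_zero nonneg(2) by (simp_all add: integrable_density integral_density)
  moreover have "(\<lambda>x. h x * V x) = (\<lambda>x. a * (f x * V x) + b * (g x * V x))"
    by (simp add: h fun_eq_iff algebra_simps)
  ultimately show ?thesis
    using nonneg(3) by (simp add: integrable_density integral_density)
qed

definition two_bump_density :: "real \<Rightarrow> real \<Rightarrow> real" where
  "two_bump_density t x = (t * psi x + (1 - t) * psi (x - 2)) / psi_integral"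

definition two_bump :: "real \<Rightarrow> real measure" where
  "two_bump t = density lborel (\<lambda>x. ennreal (two_bump_density t x))"

lemma two_bump_density_affine:
  "two_bump_density (c * s + (1 - c) * t) x = c * two_bump_density s x + (1 - c) * two_bump_density t x"
  using psi_integral_pos by (simp add: two_bump_density_def field_simps)

lemma two_bump_density_nonneg: "t \<in> {0..1} \<Longrightarrow> 0 \<le> two_bump_density t x"
  using psi_integral_pos psi_nonneg[of x] psi_nonneg[of "x - 2"]
  by (simp add: two_bump_density_def)

lemma borel_measurable_two_bump_density[measurable]: "two_bump_density t \<in> borel_measurable borel"
  unfolding two_bump_density_def[abs_def] by measurable

lemma compactly_supported_two_bump_density:
  assumes "t \<in> {0..1}"
  shows "compactly_supported_density (two_bump_density t) (-1) 3"
proof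
  show "isCont (two_bump_density t) x" for x
    unfolding two_bump_density_def[abs_def]
    using psi_integral_pos
    by (intro continuous_intros isCont_psi isCont_o2[where g = psi, OF _ isCont_psi]) simp
  show "0 \<le> two_bump_density t x" for x
    using assms by (rule two_bump_density_nonneg)
  show "two_bump_density t x = 0" if "x \<notin> {-1..3}" for x
  proof -
    have "1 \<le> \<bar>x\<bar>" "1 \<le> \<bar>x - 2\<bar>"
      using that by auto
    then show ?thesis
      by (simp add: two_bump_density_def psi_eq_0)
  qed
  have "(\<integral>x. t * psi x + (1 - t) * psi (x - 2) \<partial>lborel) = psi_integral"
    using integrable_psi integrable_psi_shift integral_psi_shift[of 2]
    by (simp add: psi_integral_def algebra_simps)
  moreover have "psi_integral \<noteq> 0"
    using psi_integral_pos by simp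
  ultimately show "integral\<^sup>L lborel (two_bump_density t) = 1"
    by (simp add: two_bump_density_def[abs_def])
qed

lemma two_bump_in_class_P_mode:
  assumes "t \<in> {0..1}" and "well_separated_max (two_bump_density t) m"
  shows "two_bump t \<in> class_P \<and> mode (two_bump t) = m"
proof -
  interpret compactly_supported_density "two_bump_density t" "-1" 3
    using assms(1) by (rule compactly_supported_two_bump_density)
  have "smooth (two_bump_density t)"
    unfolding two_bump_density_def[abs_def] add_divide_distrib times_divide_eq_left[symmetric]
    by (intro smooth_linear_combination smooth_psi smooth_shift)
  then show ?thesis
    using distr_in_class_P assms(2) by (simp add: two_bump_def)
qed

lemma two_bump_in_class_P_mode_0:
  assumes "1/2 < t" "t \<le> 1"
  shows "two_bump t \<in> class_P \<and> mode (two_bump t) = 0"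
proof (rule two_bump_in_class_P_mode)
  have "well_separated_max
      (\<lambda>x. t / psi_integral * psi (x - 0) + (1 - t) / psi_integral * psi (x - 2)) 0"
    using assms psi_integral_pos
    by (intro well_separated_max_psi_pair) (simp_all add: divide_strict_right_mono)
  then show "well_separated_max (two_bump_density t) 0"
    by (simp add: two_bump_density_def[abs_def] add_divide_distrib)
qed (use assms in simp)

lemma two_bump_in_class_P_mode_2:
  assumes "0 \<le> t" "t < 1/2"
  shows "two_bump t \<in> class_P \<and> mode (two_bump t) = 2"
proof (rule two_bump_in_class_P_mode)
  have "well_separated_max
      (\<lambda>x. (1 - t) / psi_integral * psi (x - 2) + t / psi_integral * psi (x - 0)) 2"
    using assms psi_integral_pos
    by (intro well_separated_max_psi_pair) (simp_all add: divide_strict_right_mono)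
  then show "well_separated_max (two_bump_density t) 2"
    by (simp add: two_bump_density_def[abs_def] add_divide_distrib add.commute)
qed (use assms in simp)

lemma two_bump_integral_zero_affine:
  fixes V :: "real \<Rightarrow> real"
  assumes "s \<in> {0..1}" "t \<in> {0..1}" "c * s + (1 - c) * t \<in> {0..1}"
    and "integrable (two_bump s) V" "(\<integral>y. V y \<partial>two_bump s) = 0"
    and "integrable (two_bump t) V" "(\<integral>y. V y \<partial>two_bump t) = 0"
  shows "integrable (two_bump (c * s + (1 - c) * t)) V
    \<and> (\<integral>y. V y \<partial>two_bump (c * s + (1 - c) * t)) = 0"
  using integral_density_zero_linear_combination[OF
      borel_measurable_two_bump_density borel_measurable_two_bump_density
      two_bump_density_nonneg[OF assms(1)] two_bump_density_nonneg[OF assms(2)]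
      two_bump_density_nonneg[OF assms(3)] two_bump_density_affine assms(4-)[unfolded two_bump_def]]
  unfolding two_bump_def .

theorem lemma1:
  shows "\<not> (\<exists>V :: real \<Rightarrow> real \<Rightarrow> real. \<forall>M \<in> class_P. \<forall>r :: real.
            mode M = r \<longleftrightarrow> (integrable M (V r) \<and> (\<integral>y. V r y \<partial>M) = 0))"
proof (rule notI, elim exE)
  fix V :: "real \<Rightarrow> real \<Rightarrow> real"
  assume V: "\<forall>M \<in> class_P. \<forall>r.
    mode M = r \<longleftrightarrow> (integrable M (V r) \<and> (\<integral>y. V r y \<partial>M) = 0)"
  have zero: "integrable (two_bump t) (V 0) \<and> (\<integral>y. V 0 y \<partial>two_bump t) = 0"
    if "1/2 < t" "t \<le> 1" for t
    using V two_bump_in_class_P_mode_0[OF that] by blast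
  have "integrable (two_bump (1/4)) (V 0) \<and> (\<integral>y. V 0 y \<partial>two_bump (1/4)) = 0"
    using two_bump_integral_zero_affine[of "3/4" "2/3" "-5"] zero[of "3/4"] zero[of "2/3"] by simp
  then have "mode (two_bump (1/4)) = 0"
    using V[rule_format, of "two_bump (1/4)" 0] two_bump_in_class_P_mode_2[of "1/4"] by simp
  then show False
    using two_bump_in_class_P_mode_2[of "1/4"] by simp
qed

end
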